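(* Let $(X,\|\cdot\|)$ be a Banach space, let $C$ be a closed subspace of $X$, and let $T:C\to C$ be a mapping. Assume there exist two altering distance functions $\phi,\psi:[0,\infty)\to[0,\infty)$ such that for all $x,y\in C$: (i) $\phi(\|Tx-Ty\|)\le\phi(\|x-y\|)-\psi(\|x-y\|)$; (ii) $\phi(\|Tx-y\|)\le\phi(\|x-y\|)-\psi(\|x-y\|)$. Then the null vector $\theta$ of $X$ is the only fixed point of $T$.
   Context: A function $\varphi:[0,\infty)\to[0,\infty)$ is called an altering distance function if (i) $\varphi$ is monotone increasing and continuous, and (ii) $\varphi(t)=0$ if and only if $t=0$. *)

theory Defs
  imports "HOL-Analysis.Analysis"
begin

definition altering_distance :: "(real \<Rightarrow> real) \<Rightarrow> bool" where
  "altering_distance \<phi> \<longleftrightarrow>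
     (\<forall>t\<ge>0. \<phi> t \<ge> 0) \<and>
     mono_on {0..} \<phi> \<and>
     continuous_on {0..} \<phi> \<and>
     (\<forall>t\<ge>0. \<phi> t = 0 \<longleftrightarrow> t = 0)"

end

theory Submission
  imports Defs
begin

(* Condition (ii) alone decides everything. Taking y = x gives \<phi>(\<parallel>Tx - x\<parallel>) \<le> 0, so every
   point of C is fixed; taking y = 0 for a fixed point x then gives \<psi>(\<parallel>x\<parallel>) \<le> 0, so x = 0. *)

lemma altering_distance_0:
  assumes "altering_distance \<phi>"
  shows "\<phi> 0 = 0"
  using assms unfolding altering_distance_def by simp

lemma altering_distance_nonpos_iff:
  assumes "altering_distance \<phi>" and "t \<ge> 0"
  shows "\<phi> t \<le> 0 \<longleftrightarrow> t = 0"
  using assms unfolding altering_distance_def by force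

lemma fixed_point_of_altering_contraction:
  fixes T :: "'a::real_normed_vector \<Rightarrow> 'a"
  assumes "altering_distance \<phi>" and "altering_distance \<psi>"
    and "\<forall>x\<in>S. \<forall>y\<in>S. \<phi> (norm (T x - y)) \<le> \<phi> (norm (x - y)) - \<psi> (norm (x - y))"
    and "x \<in> S"
  shows "T x = x"
proof -
  have "\<phi> (norm (T x - x)) \<le> 0"
    using assms(3,4) altering_distance_0[OF assms(1)] altering_distance_0[OF assms(2)] by fastforce
  then show ?thesis
    using altering_distance_nonpos_iff[OF assms(1)] by simp
qed

lemma altering_contraction_domain_trivial:
  fixes T :: "'a::real_normed_vector \<Rightarrow> 'a"
  assumes "altering_distance \<phi>" and "altering_distance \<psi>"
    and "\<forall>x\<in>S. \<forall>y\<in>S. \<phi> (norm (T x - y)) \<le> \<phi> (norm (x - y)) - \<psi> (norm (x - y))"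
    and "0 \<in> S" and "x \<in> S"
  shows "x = 0"
proof -
  have "\<phi> (norm (T x - 0)) \<le> \<phi> (norm (x - 0)) - \<psi> (norm (x - 0))"
    using assms(3-5) by blast
  moreover have "T x = x"
    using fixed_point_of_altering_contraction[OF assms(1-3,5)] .
  ultimately have "\<psi> (norm x) \<le> 0"
    by simp
  then show ?thesis
    using altering_distance_nonpos_iff[OF assms(2)] by simp
qed

theorem theorem2p3:
  fixes C :: "'a::banach set" and T :: "'a \<Rightarrow> 'a"
    and \<phi> \<psi> :: "real \<Rightarrow> real"
  assumes "subspace C" and "closed C"
    and "\<forall>x\<in>C. T x \<in> C"
    and "altering_distance \<phi>" and "altering_distance \<psi>"
    and "\<forall>x\<in>C. \<forall>y\<in>C. \<phi> (norm (T x - T y)) \<le> \<phi> (norm (x - y)) - \<psi> (norm (x - y))"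
    and "\<forall>x\<in>C. \<forall>y\<in>C. \<phi> (norm (T x - y)) \<le> \<phi> (norm (x - y)) - \<psi> (norm (x - y))"
  shows "{x \<in> C. T x = x} = {0}"
proof -
  have "0 \<in> C"
    using assms(1) subspace_0 by blast
  moreover have "T 0 = 0"
    using fixed_point_of_altering_contraction[OF assms(4,5,7) \<open>0 \<in> C\<close>] .
  moreover have "x = 0" if "x \<in> C" for x
    using altering_contraction_domain_trivial[OF assms(4,5,7) \<open>0 \<in> C\<close> that] .
  ultimately show ?thesis
    by auto
qed

end
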